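(* Let $b_1<\dots<b_n$ be the black and $w_1<\dots<w_n$ the white nodes of $\mathbf N=\{1,\dots,2n\}$, and for black $i$, white $j$ let $\epsilon_{i,j}=(-1)^{[i>j]}\,\mathrm{sign}(i,j)\in\{\pm1\}$, where $(-1)^{[i>j]}$ is $-1$ if $i>j$ and $1$ otherwise (these are the signs of the entries of $M=[(-1)^{[i>j]}\mathrm{sign}(i,j)Y_{i,j}]^{i=b_1..b_n}_{j=w_1..w_n}$). Then: (a) if there is no couple of consecutive white nodes $(m,m+1)$ with $b_a<m<m+1<b_{a+1}$, then $\epsilon_{b_{a+1},w}=-\epsilon_{b_a,w}$ for every white $w$; symmetrically, if there is no couple of consecutive black nodes strictly between $w_c$ and $w_{c+1}$, then $\epsilon_{b,w_{c+1}}=-\epsilon_{b,w_c}$ for every black $b$ (so $M$ is a block matrix whose blocks have checkerboard sign pattern). (b) There exist $r_1,\dots,r_n,c_1,\dots,c_n\in\{\pm1\}$ with $r_a c_d\,\epsilon_{b_a,w_d}=(-1)^{a+d}$ for all $a,d$; if $t$ denotes the number of $-1$'s among the $r_a$ and $c_d$ (whose parity is independent of the choice), then $$(-1)^t=\mathrm{sign}_c(\mathbf N)\,(-1)^{\sum_{i=1}^{2k}\lfloor n_i/2\rfloor}\ \text{ if node 1 is black},\qquad (-1)^t=(-1)^n\,\mathrm{sign}_c(\mathbf N)\,(-1)^{\sum_{i=1}^{2k}\lfloor n_i/2\rfloor}\ \text{ if node 1 is white}.$$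
   Context: Nodes $1,\dots,2n$ arranged counterclockwise, each colored black or white, $n$ of each. A couple of consecutive nodes of the same color is $(m,m+1)$, $m\in\{1,\dots,2n\}$, indices mod $2n$ (so $(2n,1)$ allowed), with $m,m+1$ same color; list all couples as $(n_1,n_1+1),\dots,(n_{2k},n_{2k}+1)$ with $n_1<\dots<n_{2k}$; the black couples have first elements $s_1<\dots<s_k$ and the white couples $u_1<\dots<u_k$. For black $i$, white $j$: $a_{i,j}$ = number of $m$ with $\min(i,j)\le m<m+1\le\max(i,j)$, $m,m+1$ same color; $\mathrm{sign}(i,j)=(-1)^{(|i-j|+a_{i,j}-1)/2}$. If node 1 is black let $\varphi(u_i)=2i-1,\varphi(s_i)=2i$; if white let $\varphi(s_i)=2i-1,\varphi(u_i)=2i$; $\mathrm{sign}_c(\mathbf N)$ = sign of the permutation $(\varphi(n_1),\dots,\varphi(n_{2k}))$, and $1$ if $k=0$. *)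

theory Defs
  imports "HOL-Combinatorics.Permutations"
begin

text \<open>Nodes are 1..2n; a colouring is col :: nat => bool, True = black, False = white.\<close>

definition nxt :: "nat \<Rightarrow> nat \<Rightarrow> nat" where
  "nxt n m = (if m = 2 * n then 1 else m + 1)"

text \<open>first elements of couples of consecutive nodes of the same colour (cyclically)\<close>
definition couples :: "(nat \<Rightarrow> bool) \<Rightarrow> nat \<Rightarrow> nat set" where
  "couples col n = {m \<in> {1..2 * n}. col m = col (nxt n m)}"

definition blacks :: "(nat \<Rightarrow> bool) \<Rightarrow> nat \<Rightarrow> nat set" where
  "blacks col n = {i \<in> {1..2 * n}. col i}"

definition whites :: "(nat \<Rightarrow> bool) \<Rightarrow> nat \<Rightarrow> nat set" where
  "whites col n = {i \<in> {1..2 * n}. \<not> col i}"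

definition bnode :: "(nat \<Rightarrow> bool) \<Rightarrow> nat \<Rightarrow> nat \<Rightarrow> nat" where
  "bnode col n a = sorted_list_of_set (blacks col n) ! (a - 1)"

definition wnode :: "(nat \<Rightarrow> bool) \<Rightarrow> nat \<Rightarrow> nat \<Rightarrow> nat" where
  "wnode col n d = sorted_list_of_set (whites col n) ! (d - 1)"

definition acount :: "(nat \<Rightarrow> bool) \<Rightarrow> nat \<Rightarrow> nat \<Rightarrow> nat" where
  "acount col i j = card {m. min i j \<le> m \<and> m + 1 \<le> max i j \<and> col m = col (m + 1)}"

definition sgnij :: "(nat \<Rightarrow> bool) \<Rightarrow> nat \<Rightarrow> nat \<Rightarrow> int" where
  "sgnij col i j = (-1) ^ (((if i \<le> j then j - i else i - j) + acount col i j - 1) div 2)"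

definition eps :: "(nat \<Rightarrow> bool) \<Rightarrow> nat \<Rightarrow> nat \<Rightarrow> int" where
  "eps col i j = (if i > j then -1 else 1) * sgnij col i j"

text \<open>phi: for a couple first element m of colour c, with p = number of couples of the
  same colour with smaller first element (so m is the (p+1)-th of its colour):
  node 1 black: phi(u_i) = 2i-1, phi(s_i) = 2i; node 1 white: phi(s_i)=2i-1, phi(u_i)=2i.\<close>
definition phi :: "(nat \<Rightarrow> bool) \<Rightarrow> nat \<Rightarrow> nat \<Rightarrow> nat" where
  "phi col n m =
     (let i = card {x \<in> couples col n. col x = col m \<and> x < m} + 1 in
      if col 1 then (if col m then 2 * i else 2 * i - 1)
      else (if col m then 2 * i - 1 else 2 * i))"

definition cperm :: "(nat \<Rightarrow> bool) \<Rightarrow> nat \<Rightarrow> nat \<Rightarrow> nat" where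
  "cperm col n = (\<lambda>i. if i \<in> {1..card (couples col n)}
      then phi col n (sorted_list_of_set (couples col n) ! (i - 1)) else i)"

definition signc :: "(nat \<Rightarrow> bool) \<Rightarrow> nat \<Rightarrow> int" where
  "signc col n = (if couples col n = {} then 1 else sign (cperm col n))"

end

theory Submission
  imports Defs
begin

text \<open>
  Let \<open>C(p)\<close> be the number of colour changes between consecutive nodes among \<open>1, ..., p\<close>.
  Rewriting \<open>sign(i,j)\<close> in terms of \<open>C\<close> shows that for a black node \<open>b\<close> and a white node \<open>w\<close>,
  \<open>eps(b,w) = (-1)^[node 1 black] s(b) s(w)\<close> with \<open>s(p) = (-1)^(p + floor(C(p)/2))\<close>.
  So the sign matrix has rank one: this gives the row and column signs of (b) directly, and (a)
  holds because \<open>s\<close> changes sign between two nodes of the same colour separated by at most one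
  node of the other colour.

  For the parity of \<open>t\<close>, the product of all \<open>r_a c_a\<close> is the product of the diagonal entries
  of the sign matrix, i.e. of \<open>s\<close> over all \<open>2n\<close> nodes, so it is governed by the parity of
  \<open>Z = sum_p floor(C(p)/2)\<close>. On the other side, the permutation of the couples is increasing
  on the couples of either colour, so its number of inversions is congruent mod 2 to the number of
  pairs of a white couple preceding a black couple plus a triangular number. Adding one node at a
  time, the parity of \<open>Z\<close> + (white-before-black couple pairs) + \<open>sum floor(m/2)\<close> over couples
  depends only on the length of the prefix, its numbers of black nodes and of black couples, and
  the colours at its two ends; evaluating this on the whole circle gives the formula.
\<close>

section \<open>Parity signs\<close>

definition parity_sign :: "int \<Rightarrow> int" where
  "parity_sign z = (if even z then 1 else -1)"

lemma parity_sign_add: "parity_sign (a + b) = parity_sign a * parity_sign b"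
  by (simp add: parity_sign_def)

lemma parity_sign_cong: "even (a - b) \<Longrightarrow> parity_sign a = parity_sign b"
  unfolding parity_sign_def by (metis add_diff_cancel_left' diff_add_cancel even_add)

lemma parity_sign_plus_one: "parity_sign (z + 1) = - parity_sign z"
  by (simp add: parity_sign_def)

lemma parity_sign_cases: "parity_sign z = 1 \<or> parity_sign z = -1"
  by (simp add: parity_sign_def)

lemma parity_sign_square: "parity_sign z * parity_sign z = 1"
  by (simp add: parity_sign_def)

lemma minus_one_power_eq_parity_sign: "(-1::int) ^ m = parity_sign (int m)"
  by (simp add: parity_sign_def)

lemma prod_parity_sign: "(\<Prod>a\<in>A. parity_sign (f a)) = parity_sign (\<Sum>a\<in>A. f a)"
  by (induction A rule: infinite_finite_induct) (simp_all add: parity_sign_add, simp_all add: parity_sign_def)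

lemma prod_plus_minus_one:
  assumes "finite A" "\<forall>a\<in>A. r a \<in> {1, -1::int}"
  shows "(\<Prod>a\<in>A. r a) = (-1) ^ card {a\<in>A. r a = -1}"
  using assms
proof (induction A rule: finite_induct)
  case (insert x F)
  then have "{a\<in>insert x F. r a = -1} = (if r x = -1 then insert x {a\<in>F. r a = -1} else {a\<in>F. r a = -1})"
    by auto
  with insert show ?case by auto
qed simp

section \<open>Sorted enumerations, ranks and inversions\<close>

lemma sorted_list_of_set_nth_less:
  fixes A :: "'a::linorder set"
  assumes "i < j" "j < card A"
  shows "sorted_list_of_set A ! i < sorted_list_of_set A ! j"
  using assms strict_sorted_list_of_set[of A] by (simp add: sorted_wrt_nth_less)

lemma sorted_list_of_set_nth_mem:
  fixes A :: "'a::linorder set"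
  assumes "finite A" "i < card A"
  shows "sorted_list_of_set A ! i \<in> A"
  using assms by (metis length_sorted_list_of_set nth_mem set_sorted_list_of_set)

lemma sorted_list_of_set_nth_Suc_le:
  fixes A :: "'a::linorder set"
  assumes "finite A" "Suc i < card A" "z \<in> A" "sorted_list_of_set A ! i < z"
  shows "sorted_list_of_set A ! Suc i \<le> z"
proof -
  obtain j where j: "j < card A" "z = sorted_list_of_set A ! j"
    using assms by (metis in_set_conv_nth length_sorted_list_of_set set_sorted_list_of_set)
  have "i < j"
  proof (rule ccontr)
    assume "\<not> i < j"
    then have "z \<le> sorted_list_of_set A ! i"
      using j assms(2) sorted_list_of_set_nth_less[of j i A] by (cases "j = i") auto
    then show False using assms(4) by simp
  qed
  then show ?thesis
    using j sorted_list_of_set_nth_less[of "Suc i" j A] by (cases "Suc i = j") auto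
qed

lemma sorted_list_of_set_nth_bij:
  fixes A :: "'a::linorder set"
  assumes "finite A"
  shows "bij_betw (\<lambda>i. sorted_list_of_set A ! (i - 1)) {1..card A} A"
proof -
  have "bij_betw (\<lambda>i. sorted_list_of_set A ! i) {0..<card A} A"
    using assms by (metis atLeast0LessThan bij_betw_nth distinct_sorted_list_of_set
        length_sorted_list_of_set set_sorted_list_of_set)
  moreover have "bij_betw (\<lambda>i. i - 1) {1..card A} {0..<card A}"
    by (rule bij_betwI[where g = "\<lambda>i. i + 1"]) auto
  ultimately show ?thesis using bij_betw_trans by (fastforce simp: comp_def)
qed

definition rank :: "'a::linorder set \<Rightarrow> 'a \<Rightarrow> nat" where
  "rank A x = card {z \<in> A. z < x}"

lemma rank_less: "finite A \<Longrightarrow> x \<in> A \<Longrightarrow> y \<in> A \<Longrightarrow> x < y \<Longrightarrow> rank A x < rank A y"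
  unfolding rank_def by (rule psubset_card_mono) auto

lemma rank_bij: "finite A \<Longrightarrow> bij_betw (rank A) A {0..<card A}"
proof -
  assume A: "finite A"
  have inj: "inj_on (rank A) A"
    by (rule inj_onI) (metis less_irrefl linorder_neq_iff rank_less[OF A])
  have "rank A ` A \<subseteq> {0..<card A}"
    unfolding rank_def using A by (auto intro!: psubset_card_mono)
  with inj have "rank A ` A = {0..<card A}"
    by (intro card_subset_eq) (auto simp: card_image)
  with inj show ?thesis by (simp add: bij_betw_def)
qed

lemma card_filter_bij_betw:
  assumes h: "bij_betw h X Y" and P: "\<And>z. z \<in> X \<Longrightarrow> P (h z) \<longleftrightarrow> Q z"
  shows "card {z \<in> X. Q z} = card {y \<in> Y. P y}"
proof (rule bij_betw_same_card, rule bij_betw_subset[OF h])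
  show "h ` {z \<in> X. Q z} = {y \<in> Y. P y}"
    using bij_betw_imp_surj_on[OF h] P by force
qed auto

lemma card_filter_xor:
  fixes X :: "('a \<times> 'b) set"
  assumes "finite X"
  shows "card {(x, y) \<in> X. P x y \<noteq> Q x y} + 2 * card {(x, y) \<in> X. P x y \<and> Q x y}
    = card {(x, y) \<in> X. P x y} + card {(x, y) \<in> X. Q x y}"
proof -
  have split: "card {(x, y) \<in> X. R x y} = card {(x, y) \<in> X. R x y \<and> S x y} + card {(x, y) \<in> X. R x y \<and> \<not> S x y}"
    for R S :: "'a \<Rightarrow> 'b \<Rightarrow> bool"
    using assms by (subst card_Un_disjoint[symmetric]) (auto intro: finite_subset arg_cong[where f = card])
  have "{(x, y) \<in> X. (P x y \<noteq> Q x y) \<and> P x y} = {(x, y) \<in> X. P x y \<and> \<not> Q x y}"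
    "{(x, y) \<in> X. (P x y \<noteq> Q x y) \<and> \<not> P x y} = {(x, y) \<in> X. Q x y \<and> \<not> P x y}"
    "{(x, y) \<in> X. Q x y \<and> P x y} = {(x, y) \<in> X. P x y \<and> Q x y}" by auto
  then show ?thesis
    using split[of "\<lambda>x y. P x y \<noteq> Q x y" P] split[of P Q] split[of Q P] by simp
qed

lemma card_lower_triangle:
  "card {(a, c) \<in> {0..<k} \<times> {0..<k}. c < a \<or> d \<and> c = a} = k * (k - 1) div 2 + of_bool d * k"
proof (induction k)
  case (Suc k)
  let ?T = "\<lambda>k. {(a, c) \<in> {0..<k} \<times> {0..<k}. c < a \<or> d \<and> c = a}"
  have eq: "?T (Suc k) = ?T k \<union> Pair k ` {c. c < k \<or> d \<and> c = k}" by auto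
  have "card (Pair k ` {c. c < k \<or> d \<and> c = k}) = k + of_bool d"
    by (subst card_image) (auto simp: inj_on_def Collect_disj_eq lessThan_def[symmetric])
  moreover have "card (?T (Suc k)) = card (?T k) + card (Pair k ` {c. c < k \<or> d \<and> c = k})"
    unfolding eq by (rule card_Un_disjoint) (auto intro: finite_subset[of _ "{0..<k} \<times> {0..<k}"])
  ultimately have "card (?T (Suc k)) = card (?T k) + k + of_bool d" by simp
  moreover have "Suc k * (Suc k - 1) div 2 = k * (k - 1) div 2 + k"
  proof -
    have "Suc k * (Suc k - 1) = k * (k - 1) + k * 2" by (cases k) (simp_all add: algebra_simps)
    then show ?thesis by simp
  qed
  ultimately show ?case using Suc by (simp add: algebra_simps)
qed simp

lemma triangle_Suc: "(k + 1) * (k + 1 - 1) div 2 = k * (k - 1) div 2 + (k::int)"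
proof -
  have "(k + 1) * k = k * (k - 1) + 2 * k" by (simp add: algebra_simps)
  then show ?thesis by simp
qed

definition inversions :: "(nat \<Rightarrow> nat) \<Rightarrow> nat \<Rightarrow> (nat \<times> nat) set" where
  "inversions p m = {(i, j). 1 \<le> i \<and> i < j \<and> j \<le> m \<and> p j < p i}"

lemma finite_inversions: "finite (inversions p m)"
  by (rule finite_subset[of _ "{1..m} \<times> {1..m}"]) (auto simp: inversions_def)

lemma permutes_increasing_eq_id:
  assumes p: "p permutes {1..m}" and incr: "\<forall>i. 1 \<le> i \<longrightarrow> i < m \<longrightarrow> p i < p (Suc i)"
  shows "p = id"
proof -
  have "sorted_wrt (<) (map p [1..<Suc m])"
    using incr by (subst sorted_wrt_iff_nth_Suc_transp) (auto simp del: upt_Suc)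
  moreover have "set (map p [1..<Suc m]) = {1..m}"
    using permutes_image[OF p] by (simp only: set_map set_upt atLeastLessThanSuc_atLeastAtMost)
  ultimately have sorted_eq: "map p [1..<Suc m] = [1..<Suc m]"
    by (intro sorted_distinct_set_unique) (auto simp: strict_sorted_iff atLeastLessThanSuc_atLeastAtMost simp del: upt_Suc)
  have "p i = i" if "i \<in> {1..m}" for i
  proof -
    have len: "i - 1 < length [1..<Suc m]" using that by auto
    have "map p [1..<Suc m] ! (i - 1) = [1..<Suc m] ! (i - 1)" by (simp only: sorted_eq)
    then show ?thesis using that unfolding nth_map[OF len] by (simp del: upt_Suc)
  qed
  then show ?thesis using p by (intro ext) (metis atLeastAtMost_iff id_apply permutes_def)
qed

lemma card_inversions_swap_adjacent:
  assumes mem: "(i, Suc i) \<in> inversions p m"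
  shows "card (inversions (p \<circ> transpose i (Suc i)) m) = card (inversions p m) - 1"
proof -
  define t where "t = transpose i (Suc i)"
  have i: "1 \<le> i" "Suc i \<le> m" and desc: "p (Suc i) < p i" using mem by (auto simp: inversions_def)
  have tt: "t (t x) = x" for x unfolding t_def by (simp add: transpose_def)
  have t_mono: "a < b \<Longrightarrow> (a, b) \<noteq> (i, Suc i) \<Longrightarrow> t a < t b" for a b
    unfolding t_def by (auto simp: transpose_def)
  have t_range: "x \<in> {1..m} \<Longrightarrow> t x \<in> {1..m}" for x unfolding t_def using i by (auto simp: transpose_def)
  let ?f = "\<lambda>(a, b). (t a, t b)"
  have img: "inversions (p \<circ> t) m = ?f ` (inversions p m - {(i, Suc i)})"
  proof (intro equalityI subsetI)
    fix z assume z: "z \<in> inversions (p \<circ> t) m"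
    then obtain c d where cd: "z = (c, d)" "1 \<le> c" "c < d" "d \<le> m" "p (t d) < p (t c)"
      by (auto simp: inversions_def)
    have "(c, d) \<noteq> (i, Suc i)" using cd desc unfolding t_def by (auto simp: transpose_def)
    then have "t c < t d" using t_mono cd by blast
    moreover have "(t c, t d) \<noteq> (i, Suc i)" using cd tt unfolding t_def by (auto simp: transpose_def)
    moreover have "t c \<in> {1..m}" "t d \<in> {1..m}" using t_range cd by auto
    ultimately have "(t c, t d) \<in> inversions p m - {(i, Suc i)}" using cd by (auto simp: inversions_def)
    then show "z \<in> ?f ` (inversions p m - {(i, Suc i)})"
      by (rule rev_image_eqI) (simp add: cd tt)
  next
    fix z assume "z \<in> ?f ` (inversions p m - {(i, Suc i)})"
    then obtain a b where ab: "(a, b) \<in> inversions p m" "(a, b) \<noteq> (i, Suc i)" "z = (t a, t b)" by auto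
    then have "t a < t b" "t a \<in> {1..m}" "t b \<in> {1..m}"
      using t_mono t_range by (auto simp: inversions_def)
    then show "z \<in> inversions (p \<circ> t) m" using ab tt by (auto simp: inversions_def)
  qed
  have inj: "inj_on ?f (inversions p m - {(i, Suc i)})"
    by (rule inj_onI) (auto dest: arg_cong[where f = t] simp: tt)
  show ?thesis
    unfolding t_def[symmetric] img card_image[OF inj] using card_Diff_singleton[OF mem] by simp
qed

lemma sign_eq_inversions:
  assumes "p permutes {1..m}"
  shows "sign p = (-1) ^ card (inversions p m)"
  using assms
proof (induction "card (inversions p m)" arbitrary: p rule: less_induct)
  case less
  show ?case
  proof (cases "\<forall>i. 1 \<le> i \<longrightarrow> i < m \<longrightarrow> p i < p (Suc i)")
    case True
    then have "p = id" using permutes_increasing_eq_id less.prems by blast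
    then have "inversions p m = {}" by (auto simp: inversions_def)
    then show ?thesis using \<open>p = id\<close> by simp
  next
    case False
    then obtain i where i: "1 \<le> i" "i < m" "\<not> p i < p (Suc i)" by blast
    have "p i \<noteq> p (Suc i)" using less.prems permutes_inj by (metis injD n_not_Suc_n)
    with i have mem: "(i, Suc i) \<in> inversions p m" by (auto simp: inversions_def)
    define t where "t = transpose i (Suc i)"
    have tperm: "t permutes {1..m}" unfolding t_def using i by (intro permutes_swap_id) auto
    have qperm: "p \<circ> t permutes {1..m}" using tperm less.prems by (rule permutes_compose)
    have card: "card (inversions (p \<circ> t) m) = card (inversions p m) - 1"
      unfolding t_def by (rule card_inversions_swap_adjacent[OF mem])
    have pos: "card (inversions p m) > 0" using mem finite_inversions card_gt_0_iff by blast
    have "sign p = sign (p \<circ> t) * sign t"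
      using sign_compose[OF permutes_imp_permutation[OF _ qperm] permutes_imp_permutation[OF _ tperm]]
      by (simp add: comp_assoc o_def t_def)
    also have "sign t = -1" unfolding t_def by (simp add: sign_swap_id)
    also have "sign (p \<circ> t) = (-1) ^ card (inversions (p \<circ> t) m)"
      using less.hyps[OF _ qperm] card pos by simp
    finally show ?thesis using card pos by (metis Suc_diff_1 mult_minus1_right power_Suc2)
  qed
qed

lemma card_inversions_sorted:
  fixes A :: "'a::linorder set"
  assumes A: "finite A" and p: "\<forall>i\<in>{1..card A}. p i = f (sorted_list_of_set A ! (i - 1))"
  shows "card (inversions p (card A)) = card {(x, y) \<in> A \<times> A. x < y \<and> f y < f x}"
proof -
  define s where "s i = sorted_list_of_set A ! (i - 1)" for i
  have s: "bij_betw s {1..card A} A" unfolding s_def by (rule sorted_list_of_set_nth_bij[OF A])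
  have mono: "s i < s j" if "i \<in> {1..card A}" "j \<in> {1..card A}" "i < j" for i j
  proof -
    have "i - 1 < j - 1" using that by auto
    then show ?thesis using that sorted_list_of_set_nth_less[of "i - 1" "j - 1" A] unfolding s_def by auto
  qed
  have less: "s i < s j \<longleftrightarrow> i < j" if "i \<in> {1..card A}" "j \<in> {1..card A}" for i j
    using that mono[of i j] mono[of j i] by (cases i j rule: linorder_cases) auto
  have "inversions p (card A) = {z \<in> {1..card A} \<times> {1..card A}. fst z < snd z \<and> p (snd z) < p (fst z)}"
    by (auto simp: inversions_def)
  also have "card \<dots> = card {z \<in> A \<times> A. fst z < snd z \<and> f (snd z) < f (fst z)}"
    using p less by (intro card_filter_bij_betw[OF bij_betw_map_prod[OF s s]]) (auto simp: s_def)
  also have "{z \<in> A \<times> A. fst z < snd z \<and> f (snd z) < f (fst z)} = {(x, y) \<in> A \<times> A. x < y \<and> f y < f x}"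
    by auto
  finally show ?thesis .
qed

section \<open>Colour changes and node signs\<close>

definition colour_changes :: "(nat \<Rightarrow> bool) \<Rightarrow> nat \<Rightarrow> int" where
  "colour_changes col p = (\<Sum>m\<in>{1..<p}. of_bool (col m \<noteq> col (Suc m)))"

lemma colour_changes_Suc:
  "1 \<le> p \<Longrightarrow> colour_changes col (Suc p) = colour_changes col p + of_bool (col p \<noteq> col (Suc p))"
  by (simp add: colour_changes_def)

lemma even_colour_changes_iff: "1 \<le> p \<Longrightarrow> even (colour_changes col p) \<longleftrightarrow> col p = col 1"
proof (induction p rule: nat_induct_at_least)
  case base then show ?case by (simp add: colour_changes_def)
next
  case (Suc p) then show ?case by (auto simp: colour_changes_Suc)
qed

lemma acount_sym: "acount col i j = acount col j i"
  unfolding acount_def by (simp add: min.commute max.commute)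

text \<open>Each of the \<open>j - i\<close> adjacencies between \<open>i\<close> and \<open>j\<close> is either a colour change or counted
  by \<open>acount\<close>.\<close>
lemma acount_eq_colour_changes:
  assumes "1 \<le> i" "i \<le> j"
  shows "int (acount col i j) = int (j - i) - (colour_changes col j - colour_changes col i)"
proof -
  have "{m. min i j \<le> m \<and> m + 1 \<le> max i j \<and> col m = col (m + 1)} = {i..<j} \<inter> {m. col m = col (Suc m)}"
    using assms by auto
  then have "int (acount col i j) = (\<Sum>m\<in>{i..<j}. of_bool (col m = col (Suc m)))"
    unfolding acount_def by (simp add: sum_of_bool_eq)
  moreover have "colour_changes col j = colour_changes col i + (\<Sum>m\<in>{i..<j}. of_bool (col m \<noteq> col (Suc m)))"
    unfolding colour_changes_def by (rule sum.atLeastLessThan_concat[symmetric]) (use assms in auto)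
  moreover have "(\<Sum>m\<in>{i..<j}. of_bool (col m = col (Suc m)) + of_bool (col m \<noteq> col (Suc m))) = (\<Sum>m\<in>{i..<j}. 1::int)"
    by (rule sum.cong) auto
  ultimately show ?thesis using assms by (simp add: sum.distrib)
qed

lemma sgnij_eq_parity_sign:
  assumes "1 \<le> i" "i < j"
  shows "sgnij col i j = parity_sign ((int (j - i) + int (acount col i j) - 1) div 2)"
         "sgnij col j i = sgnij col i j"
proof -
  have "int ((j - i + acount col i j - 1) div 2) = (int (j - i) + int (acount col i j) - 1) div 2"
    using assms by (simp add: zdiv_int of_nat_diff)
  then show "sgnij col i j = parity_sign ((int (j - i) + int (acount col i j) - 1) div 2)"
    using assms unfolding sgnij_def by (simp add: minus_one_power_eq_parity_sign)
  show "sgnij col j i = sgnij col i j"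
    using assms unfolding sgnij_def by (simp add: acount_sym)
qed

definition node_sign :: "(nat \<Rightarrow> bool) \<Rightarrow> nat \<Rightarrow> int" where
  "node_sign col p = parity_sign (int p + colour_changes col p div 2)"

lemma node_sign_cases: "node_sign col p = 1 \<or> node_sign col p = -1"
  by (simp add: node_sign_def parity_sign_cases)

lemma eps_eq_node_signs:
  assumes "1 \<le> b" "1 \<le> w" "col b" "\<not> col w"
  shows "eps col b w = (if col 1 then -1 else 1) * node_sign col b * node_sign col w"
proof -
  define cb where "cb = colour_changes col b"
  define cw where "cw = colour_changes col w"
  have parity: "even cb \<longleftrightarrow> col 1" "even cw \<longleftrightarrow> \<not> col 1"
    using even_colour_changes_iff[of b col] even_colour_changes_iff[of w col] assms
    unfolding cb_def cw_def by auto
  have "(if col 1 then -1 else 1) = parity_sign (of_bool (col 1))"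
    by (simp add: parity_sign_def)
  then have rhs: "(if col 1 then -1 else 1) * node_sign col b * node_sign col w
      = parity_sign (of_bool (col 1) + (int b + cb div 2) + (int w + cw div 2))"
    unfolding node_sign_def cb_def cw_def by (simp only: parity_sign_add)
  have "b \<noteq> w" using assms by auto
  then consider "b < w" | "w < b" by linarith
  then show ?thesis
  proof cases
    case 1
    have "int (acount col b w) = int w - int b - (cw - cb)"
      using 1 assms acount_eq_colour_changes[of b w col] unfolding cb_def cw_def by simp
    then have "eps col b w = parity_sign ((2 * (int w - int b) - (cw - cb) - 1) div 2)"
      using 1 sgnij_eq_parity_sign[of b w col] assms unfolding eps_def by (simp add: of_nat_diff) (simp add: algebra_simps)
    also have "\<dots> = parity_sign (of_bool (col 1) + (int b + cb div 2) + (int w + cw div 2))"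
      by (rule parity_sign_cong) (use 1 parity in \<open>cases "col 1"; simp; presburger\<close>)
    finally show ?thesis using rhs by simp
  next
    case 2
    have "int (acount col w b) = int b - int w - (cb - cw)"
      using 2 assms acount_eq_colour_changes[of w b col] unfolding cb_def cw_def by simp
    then have "eps col b w = - parity_sign ((2 * (int b - int w) - (cb - cw) - 1) div 2)"
      using 2 sgnij_eq_parity_sign[of w b col] assms unfolding eps_def by (simp add: of_nat_diff) (simp add: algebra_simps)
    also have "\<dots> = parity_sign ((2 * (int b - int w) - (cb - cw) - 1) div 2 + 1)"
      by (simp add: parity_sign_plus_one)
    also have "\<dots> = parity_sign (of_bool (col 1) + (int b + cb div 2) + (int w + cw div 2))"
      by (rule parity_sign_cong) (use 2 parity in \<open>cases "col 1"; simp; presburger\<close>)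
    finally show ?thesis using rhs by simp
  qed
qed

lemma node_sign_flip:
  assumes "1 \<le> x" "x < y" "y \<le> x + 2" "col y = col x" "\<forall>m. x < m \<and> m < y \<longrightarrow> col m \<noteq> col x"
  shows "node_sign col y = - node_sign col x"
proof -
  consider "y = Suc x" | "y = Suc (Suc x)" using assms(2,3) by linarith
  then show ?thesis
  proof cases
    case 1
    then have "colour_changes col y = colour_changes col x"
      using assms colour_changes_Suc[of x col] by simp
    then show ?thesis using 1 by (simp add: node_sign_def parity_sign_def)
  next
    case 2
    then have "col (Suc x) \<noteq> col x" using assms(5) by simp
    then have "colour_changes col y = colour_changes col x + 2"
      using 2 assms colour_changes_Suc[of x col] colour_changes_Suc[of "Suc x" col] by simp
    then have "int y + colour_changes col y div 2 = (int x + colour_changes col x div 2 + 2) + 1"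
      using 2 by simp
    then show ?thesis
      unfolding node_sign_def parity_sign_plus_one by (simp add: parity_sign_add parity_sign_def)
  qed
qed

lemma node_sign_flip_sorted:
  fixes col :: "nat \<Rightarrow> bool" and c :: bool and N k :: nat
  defines "xs \<equiv> sorted_list_of_set {i \<in> {1..N}. col i = c}"
  assumes k: "Suc k < card {i \<in> {1..N}. col i = c}"
    and no_pair: "\<not> (\<exists>m. xs ! k < m \<and> m + 1 < xs ! Suc k \<and> col m \<noteq> c \<and> col (m + 1) \<noteq> c)"
  shows "node_sign col (xs ! Suc k) = - node_sign col (xs ! k)"
proof (rule node_sign_flip)
  let ?A = "{i \<in> {1..N}. col i = c}"
  have x: "xs ! k \<in> ?A" and y: "xs ! Suc k \<in> ?A"
    using k sorted_list_of_set_nth_mem[of ?A] unfolding xs_def by auto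
  then show "1 \<le> xs ! k" "col (xs ! Suc k) = col (xs ! k)" by auto
  show less: "xs ! k < xs ! Suc k" using k sorted_list_of_set_nth_less unfolding xs_def by blast
  show between: "\<forall>m. xs ! k < m \<and> m < xs ! Suc k \<longrightarrow> col m \<noteq> col (xs ! k)"
  proof (intro allI impI)
    fix m assume m: "xs ! k < m \<and> m < xs ! Suc k"
    then have "m \<notin> ?A" using sorted_list_of_set_nth_Suc_le[OF _ k, of m] unfolding xs_def by fastforce
    then show "col m \<noteq> col (xs ! k)" using m x y by auto
  qed
  show "xs ! Suc k \<le> xs ! k + 2"
  proof (rule ccontr)
    assume "\<not> xs ! Suc k \<le> xs ! k + 2"
    then have "col (xs ! k + 1) \<noteq> c \<and> col (xs ! k + 1 + 1) \<noteq> c"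
      using between x by auto
    then show False using no_pair \<open>\<not> xs ! Suc k \<le> xs ! k + 2\<close> by force
  qed
qed

section \<open>Rows and columns of the sign matrix\<close>

lemma finite_blacks: "finite (blacks col n)" and finite_whites: "finite (whites col n)"
  by (simp_all add: blacks_def whites_def)

lemma blacks_Un_whites: "blacks col n \<union> whites col n = {1..2 * n}"
  and blacks_Int_whites: "blacks col n \<inter> whites col n = {}"
  by (auto simp: blacks_def whites_def)

lemma card_whites: "card (blacks col n) = n \<Longrightarrow> card (whites col n) = n"
  using card_Un_disjoint[OF finite_blacks finite_whites blacks_Int_whites, of col n]
  by (simp add: blacks_Un_whites)

lemma bnode_mem: "card (blacks col n) = n \<Longrightarrow> a \<in> {1..n} \<Longrightarrow> bnode col n a \<in> blacks col n"
  unfolding bnode_def using sorted_list_of_set_nth_mem[OF finite_blacks, of "a - 1"] by auto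

lemma wnode_mem: "card (blacks col n) = n \<Longrightarrow> d \<in> {1..n} \<Longrightarrow> wnode col n d \<in> whites col n"
  unfolding wnode_def using sorted_list_of_set_nth_mem[OF finite_whites, of "d - 1"] card_whites by auto

lemma eps_bnode_wnode:
  assumes "card (blacks col n) = n" "a \<in> {1..n}" "d \<in> {1..n}"
  shows "eps col (bnode col n a) (wnode col n d)
      = (if col 1 then -1 else 1) * node_sign col (bnode col n a) * node_sign col (wnode col n d)"
  using bnode_mem[OF assms(1,2)] wnode_mem[OF assms(1,3)]
  by (intro eps_eq_node_signs) (auto simp: blacks_def whites_def)

lemma eps_row_flip:
  assumes n: "card (blacks col n) = n" and a: "a \<in> {1..<n}"
    and no_pair: "\<not> (\<exists>m. bnode col n a < m \<and> m + 1 < bnode col n (a + 1) \<and> \<not> col m \<and> \<not> col (m + 1))"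
    and w: "w \<in> whites col n"
  shows "eps col (bnode col n (a + 1)) w = - eps col (bnode col n a) w"
proof -
  have blacks: "blacks col n = {i \<in> {1..2 * n}. col i = True}" by (simp add: blacks_def)
  have "node_sign col (bnode col n (a + 1)) = - node_sign col (bnode col n a)"
    using node_sign_flip_sorted[where k = "a - 1" and col = col and c = True and N = "2 * n"] n a no_pair
    unfolding bnode_def blacks by simp
  moreover have "bnode col n a \<in> blacks col n" "bnode col n (a + 1) \<in> blacks col n"
    using bnode_mem[OF n] a by auto
  ultimately show ?thesis
    using w eps_eq_node_signs[of _ w col] by (simp add: blacks_def whites_def)
qed

lemma eps_column_flip:
  assumes n: "card (blacks col n) = n" and d: "d \<in> {1..<n}"
    and no_pair: "\<not> (\<exists>m. wnode col n d < m \<and> m + 1 < wnode col n (d + 1) \<and> col m \<and> col (m + 1))"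
    and b: "b \<in> blacks col n"
  shows "eps col b (wnode col n (d + 1)) = - eps col b (wnode col n d)"
proof -
  have whites: "whites col n = {i \<in> {1..2 * n}. col i = False}" by (simp add: whites_def)
  have "node_sign col (wnode col n (d + 1)) = - node_sign col (wnode col n d)"
    using node_sign_flip_sorted[where k = "d - 1" and col = col and c = False and N = "2 * n"] card_whites[OF n] d no_pair
    unfolding wnode_def whites by simp
  moreover have "wnode col n d \<in> whites col n" "wnode col n (d + 1) \<in> whites col n"
    using wnode_mem[OF n] d by auto
  ultimately show ?thesis
    using b eps_eq_node_signs[of b _ col] by (simp add: blacks_def whites_def)
qed

lemma exists_row_column_signs:
  assumes n: "card (blacks col n) = n"
  shows "\<exists>r c :: nat \<Rightarrow> int. (\<forall>a\<in>{1..n}. r a \<in> {1, -1}) \<and> (\<forall>d\<in>{1..n}. c d \<in> {1, -1}) \<and>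
        (\<forall>a\<in>{1..n}. \<forall>d\<in>{1..n}. r a * c d * eps col (bnode col n a) (wnode col n d) = (-1) ^ (a + d))"
proof (intro exI conjI ballI)
  let ?r = "\<lambda>a. (if col 1 then -1 else 1) * (-1) ^ a * node_sign col (bnode col n a)"
  let ?c = "\<lambda>d. (-1) ^ d * node_sign col (wnode col n d)"
  show "?r a \<in> {1, -1}" "?c a \<in> {1, -1}" for a
    using node_sign_cases[of col "bnode col n a"] node_sign_cases[of col "wnode col n a"]
    by (auto simp: minus_one_power_eq_parity_sign parity_sign_def)
  fix a d assume "a \<in> {1..n}" "d \<in> {1..n}"
  then have "?r a * ?c d * eps col (bnode col n a) (wnode col n d) = (-1) ^ (a + d) *
      (node_sign col (bnode col n a) * node_sign col (bnode col n a)) *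
      (node_sign col (wnode col n d) * node_sign col (wnode col n d))"
    using eps_bnode_wnode[OF n] by (simp add: power_add)
  then show "?r a * ?c d * eps col (bnode col n a) (wnode col n d) = (-1) ^ (a + d)"
    by (simp add: node_sign_def parity_sign_square)
qed

lemma prod_bnode: "card (blacks col n) = n \<Longrightarrow> (\<Prod>a\<in>{1..n}. g (bnode col n a)) = (\<Prod>x\<in>blacks col n. g x)"
  unfolding bnode_def using prod.reindex_bij_betw[OF sorted_list_of_set_nth_bij[OF finite_blacks]] by metis

lemma prod_wnode: "card (blacks col n) = n \<Longrightarrow> (\<Prod>d\<in>{1..n}. g (wnode col n d)) = (\<Prod>x\<in>whites col n. g x)"
  unfolding wnode_def using prod.reindex_bij_betw[OF sorted_list_of_set_nth_bij[OF finite_whites]] card_whites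
  by metis

lemma prod_diagonal_eps:
  assumes n: "card (blacks col n) = n"
  shows "(\<Prod>a\<in>{1..n}. eps col (bnode col n a) (wnode col n a))
      = (if col 1 then (-1) ^ n else 1) * (\<Prod>p\<in>{1..2 * n}. node_sign col p)"
proof -
  have "(\<Prod>a\<in>{1..n}. eps col (bnode col n a) (wnode col n a))
      = (\<Prod>a\<in>{1..n}. if col 1 then -1 else 1) * (\<Prod>a\<in>{1..n}. node_sign col (bnode col n a))
        * (\<Prod>a\<in>{1..n}. node_sign col (wnode col n a))"
    using eps_bnode_wnode[OF n] by (simp add: prod.distrib)
  also have "\<dots> = (if col 1 then (-1) ^ n else 1)
      * ((\<Prod>x\<in>blacks col n. node_sign col x) * (\<Prod>x\<in>whites col n. node_sign col x))"
    unfolding prod_bnode[OF n] prod_wnode[OF n] by simp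
  also have "(\<Prod>x\<in>blacks col n. node_sign col x) * (\<Prod>x\<in>whites col n. node_sign col x)
      = (\<Prod>p\<in>{1..2 * n}. node_sign col p)"
    using prod.union_disjoint[OF finite_blacks finite_whites blacks_Int_whites] blacks_Un_whites by metis
  finally show ?thesis .
qed

lemma row_column_signs_parity:
  assumes n: "card (blacks col n) = n"
    and r: "\<forall>a\<in>{1..n}. r a \<in> {1, -1::int}" and c: "\<forall>d\<in>{1..n}. c d \<in> {1, -1::int}"
    and rc: "\<forall>a\<in>{1..n}. \<forall>d\<in>{1..n}. r a * c d * eps col (bnode col n a) (wnode col n d) = (-1) ^ (a + d)"
  shows "(-1::int) ^ (card {a\<in>{1..n}. r a = -1} + card {d\<in>{1..n}. c d = -1})
      = (if col 1 then (-1) ^ n else 1) * parity_sign (\<Sum>p\<in>{1..2 * n}. int p + colour_changes col p div 2)"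
proof -
  have "r a * c a = eps col (bnode col n a) (wnode col n a)" if a: "a \<in> {1..n}" for a
  proof -
    have "eps col (bnode col n a) (wnode col n a) \<in> {1, -1}"
      using eps_bnode_wnode[OF n a a] node_sign_cases[of col "bnode col n a"]
        node_sign_cases[of col "wnode col n a"] by auto
    moreover have "r a * c a * eps col (bnode col n a) (wnode col n a) = 1"
      using rc a by (simp flip: mult_2)
    ultimately show ?thesis by auto
  qed
  then have "(\<Prod>a\<in>{1..n}. eps col (bnode col n a) (wnode col n a)) = (\<Prod>a\<in>{1..n}. r a) * (\<Prod>d\<in>{1..n}. c d)"
    by (simp add: prod.distrib[symmetric])
  then have "(-1::int) ^ (card {a\<in>{1..n}. r a = -1} + card {d\<in>{1..n}. c d = -1})
      = (\<Prod>a\<in>{1..n}. eps col (bnode col n a) (wnode col n a))"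
    using prod_plus_minus_one[OF _ r] prod_plus_minus_one[OF _ c] by (simp add: power_add)
  then show ?thesis
    unfolding prod_diagonal_eps[OF n] node_sign_def prod_parity_sign by simp
qed

section \<open>Prefix statistics of the colouring\<close>

definition black_pairs :: "(nat \<Rightarrow> bool) \<Rightarrow> nat \<Rightarrow> int" where
  "black_pairs col L = (\<Sum>m\<in>{1..<L}. of_bool (col m \<and> col (Suc m)))"

definition white_pairs :: "(nat \<Rightarrow> bool) \<Rightarrow> nat \<Rightarrow> int" where
  "white_pairs col L = (\<Sum>m\<in>{1..<L}. of_bool (\<not> col m \<and> \<not> col (Suc m)))"

definition blacks_upto :: "(nat \<Rightarrow> bool) \<Rightarrow> nat \<Rightarrow> int" where
  "blacks_upto col L = (\<Sum>p\<in>{1..L}. of_bool (col p))"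

definition white_black_pairs :: "(nat \<Rightarrow> bool) \<Rightarrow> nat \<Rightarrow> int" where
  "white_black_pairs col L = (\<Sum>m\<in>{1..<L}. of_bool (col m \<and> col (Suc m)) * white_pairs col m)"

definition couple_halves :: "(nat \<Rightarrow> bool) \<Rightarrow> nat \<Rightarrow> int" where
  "couple_halves col L = (\<Sum>m\<in>{1..<L}. of_bool (col m = col (Suc m)) * int (m div 2))"

definition change_halves :: "(nat \<Rightarrow> bool) \<Rightarrow> nat \<Rightarrow> int" where
  "change_halves col L = (\<Sum>p\<in>{1..L}. colour_changes col p div 2)"

lemma prefix_statistics_Suc:
  assumes "1 \<le> L"
  shows "black_pairs col (Suc L) = black_pairs col L + of_bool (col L \<and> col (Suc L))"
    "white_pairs col (Suc L) = white_pairs col L + of_bool (\<not> col L \<and> \<not> col (Suc L))"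
    "blacks_upto col (Suc L) = blacks_upto col L + of_bool (col (Suc L))"
    "white_black_pairs col (Suc L) = white_black_pairs col L + of_bool (col L \<and> col (Suc L)) * white_pairs col L"
    "couple_halves col (Suc L) = couple_halves col L + of_bool (col L = col (Suc L)) * int (L div 2)"
    "change_halves col (Suc L) = change_halves col L + colour_changes col (Suc L) div 2"
  using assms by (simp_all add: black_pairs_def white_pairs_def blacks_upto_def white_black_pairs_def
      couple_halves_def change_halves_def)

lemma colour_changes_add_pairs:
  "1 \<le> L \<Longrightarrow> colour_changes col L + black_pairs col L + white_pairs col L = int L - 1"
proof (induction L rule: nat_induct_at_least)
  case base then show ?case by (simp add: colour_changes_def black_pairs_def white_pairs_def)
next
  case (Suc L) then show ?case by (auto simp: prefix_statistics_Suc colour_changes_Suc)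
qed

text \<open>A prefix with \<open>nb\<close> black nodes and \<open>kb\<close> black pairs has \<open>nb - kb\<close> black runs, and every
  black run contributes two colour changes, except at the two ends of the prefix.\<close>
lemma colour_changes_eq_runs:
  "1 \<le> L \<Longrightarrow> colour_changes col L = 2 * (blacks_upto col L - black_pairs col L) - of_bool (col 1) - of_bool (col L)"
proof (induction L rule: nat_induct_at_least)
  case base then show ?case by (simp add: colour_changes_def black_pairs_def blacks_upto_def)
next
  case (Suc L) then show ?case by (auto simp: prefix_statistics_Suc colour_changes_Suc)
qed

lemma colour_changes_div_2:
  assumes "1 \<le> L"
  shows "colour_changes col L div 2 = blacks_upto col L - black_pairs col L - of_bool (col 1 \<or> col L)"
  using colour_changes_eq_runs[OF assms, of col] by (cases "col 1"; cases "col L") simp_all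

text \<open>The parity of \<open>change_halves + white_black_pairs + couple_halves\<close> of a prefix, as a function of
  \<open>h = L div 2\<close>, \<open>q = odd L\<close>, the numbers \<open>nb\<close>, \<open>kb\<close> of black nodes and black pairs and the end
  colours \<open>f\<close>, \<open>e\<close>. It is the unique expression of this shape compatible with adding one node;
  the triangular number \<open>t = kb (kb - 1) / 2\<close> is passed separately to keep that step linear.\<close>
definition prefix_parity_term :: "int \<Rightarrow> bool \<Rightarrow> int \<Rightarrow> int \<Rightarrow> int \<Rightarrow> bool \<Rightarrow> bool \<Rightarrow> int" where
  "prefix_parity_term h q nb kb t f e =
     nb * (1 + of_bool q + of_bool f) + kb * (of_bool q + of_bool f) + h * (of_bool q + of_bool e) + of_bool (q \<and> f) + t"

lemma prefix_parity_step:
  fixes h nb kb t Z P S :: int and q f e x :: bool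
  assumes "even (Z + P + S + prefix_parity_term h q nb kb t f e)"
  shows "even ((Z + (nb + of_bool x - (kb + of_bool (e \<and> x)) - of_bool (f \<or> x)))
    + (P + of_bool (e \<and> x) * (2 * h + of_bool q - 1 - kb - (2 * (nb - kb) - of_bool f - of_bool e)))
    + (S + of_bool (e = x) * h)
    + prefix_parity_term (h + of_bool q) (\<not> q) (nb + of_bool x) (kb + of_bool (e \<and> x)) (t + of_bool (e \<and> x) * kb) f x)"
  using assms unfolding prefix_parity_term_def
  by (cases q; cases f; cases e; cases x) (simp_all add: algebra_simps, argo+)

lemma prefix_parity:
  assumes "1 \<le> L"
  shows "even (change_halves col L + white_black_pairs col L + couple_halves col L
    + prefix_parity_term (int L div 2) (odd L) (blacks_upto col L) (black_pairs col L)
        (black_pairs col L * (black_pairs col L - 1) div 2) (col 1) (col L))"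
  using assms
proof (induction L rule: nat_induct_at_least)
  case base
  then show ?case
    by (simp add: change_halves_def white_black_pairs_def couple_halves_def prefix_parity_term_def
        blacks_upto_def black_pairs_def colour_changes_def)
next
  case (Suc L)
  define nb kb h where "nb = blacks_upto col L" and "kb = black_pairs col L" and "h = int L div 2"
  have L: "int L = 2 * h + of_bool (odd L)" and h: "int (Suc L) div 2 = h + of_bool (odd L)"
    and q: "odd (Suc L) \<longleftrightarrow> \<not> odd L"
    unfolding h_def by (cases "even L"; auto elim!: evenE oddE)+
  have Z: "change_halves col (Suc L) = change_halves col L
      + (nb + of_bool (col (Suc L)) - (kb + of_bool (col L \<and> col (Suc L))) - of_bool (col 1 \<or> col (Suc L)))"
    using colour_changes_div_2[of "Suc L" col] Suc.hyps by (simp add: prefix_statistics_Suc nb_def kb_def)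
  have "white_pairs col L = int L - 1 - kb - colour_changes col L"
    using colour_changes_add_pairs[OF Suc.hyps, of col] unfolding kb_def by simp
  then have P: "white_black_pairs col (Suc L) = white_black_pairs col L + of_bool (col L \<and> col (Suc L))
      * (2 * h + of_bool (odd L) - 1 - kb - (2 * (nb - kb) - of_bool (col 1) - of_bool (col L)))"
    using colour_changes_eq_runs[OF Suc.hyps, of col] Suc.hyps
    by (simp add: prefix_statistics_Suc nb_def kb_def flip: L)
  have S: "couple_halves col (Suc L) = couple_halves col L + of_bool (col L = col (Suc L)) * h"
    using Suc.hyps by (simp add: prefix_statistics_Suc h_def zdiv_int)
  have T: "black_pairs col (Suc L) * (black_pairs col (Suc L) - 1) div 2
      = kb * (kb - 1) div 2 + of_bool (col L \<and> col (Suc L)) * kb"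
    using triangle_Suc[of kb] Suc.hyps by (simp add: prefix_statistics_Suc kb_def)
  show ?case
    unfolding Z P S T h q
    unfolding prefix_statistics_Suc(1,3)[OF Suc.hyps] nb_def[symmetric] kb_def[symmetric]
    by (rule prefix_parity_step) (use Suc.IH in \<open>simp add: nb_def kb_def h_def\<close>)
qed

lemma parity_sign_node_sum:
  "parity_sign (\<Sum>p\<in>{1..2 * n}. int p + colour_changes col p div 2) = (-1) ^ n * parity_sign (change_halves col (2 * n))"
proof -
  have "2 * (\<Sum>p\<in>{1..2 * n}. int p) = 2 * (int n * (2 * int n + 1))"
    using double_gauss_sum_from_Suc_0[of "2 * n", where 'a = int] by (simp add: algebra_simps)
  then have "(\<Sum>p\<in>{1..2 * n}. int p) = int n + 2 * (int n * int n)" by (simp add: algebra_simps)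
  then show ?thesis
    by (simp add: sum.distrib change_halves_def parity_sign_add minus_one_power_eq_parity_sign)
      (simp add: parity_sign_def)
qed

section \<open>Couples and their permutation\<close>

definition black_couples :: "(nat \<Rightarrow> bool) \<Rightarrow> nat \<Rightarrow> nat set" where
  "black_couples col n = {x \<in> couples col n. col x}"

definition white_couples :: "(nat \<Rightarrow> bool) \<Rightarrow> nat \<Rightarrow> nat set" where
  "white_couples col n = {x \<in> couples col n. \<not> col x}"

lemma finite_couples: "finite (couples col n)"
  by (simp add: couples_def)

lemma finite_black_couples: "finite (black_couples col n)"
  and finite_white_couples: "finite (white_couples col n)"
  by (simp_all add: black_couples_def white_couples_def finite_couples)

lemma couples_eq_black_couples_Un: "couples col n = black_couples col n \<union> white_couples col n"
  and black_couples_Int_white_couples: "black_couples col n \<inter> white_couples col n = {}"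
  by (auto simp: black_couples_def white_couples_def)

lemma black_couples_eq: "0 < n \<Longrightarrow> black_couples col n
    = {m \<in> {1..<2 * n}. col m \<and> col (Suc m)} \<union> (if col (2 * n) \<and> col 1 then {2 * n} else {})"
  by (auto simp: black_couples_def couples_def nxt_def)

lemma white_couples_eq: "0 < n \<Longrightarrow> white_couples col n
    = {m \<in> {1..<2 * n}. \<not> col m \<and> \<not> col (Suc m)} \<union> (if \<not> col (2 * n) \<and> \<not> col 1 then {2 * n} else {})"
  by (auto simp: white_couples_def couples_def nxt_def)

lemma card_black_couples:
  "0 < n \<Longrightarrow> int (card (black_couples col n)) = black_pairs col (2 * n) + of_bool (col (2 * n) \<and> col 1)"
  unfolding black_couples_eq black_pairs_def
  by (subst card_Un_disjoint) (auto simp: sum_of_bool_eq Int_def conj_commute)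

lemma card_white_couples:
  "0 < n \<Longrightarrow> int (card (white_couples col n)) = white_pairs col (2 * n) + of_bool (\<not> col (2 * n) \<and> \<not> col 1)"
  unfolding white_couples_eq white_pairs_def
  by (subst card_Un_disjoint) (auto simp: sum_of_bool_eq Int_def conj_commute)

lemma white_pairs_circle:
  assumes "0 < n" "card (blacks col n) = n"
  shows "white_pairs col (2 * n) = black_pairs col (2 * n) + of_bool (col 1) + of_bool (col (2 * n)) - 1"
proof -
  have "blacks_upto col (2 * n) = int (card (blacks col n))"
    unfolding blacks_upto_def blacks_def by (simp add: sum_of_bool_eq Int_def conj_commute)
  then show ?thesis
    using colour_changes_add_pairs[of "2 * n" col] colour_changes_eq_runs[of "2 * n" col] assms by simp
qed

lemma card_white_couples_eq_black:
  assumes "0 < n" "card (blacks col n) = n"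
  shows "card (white_couples col n) = card (black_couples col n)"
  using card_black_couples[OF assms(1), of col] card_white_couples[OF assms(1), of col] white_pairs_circle[OF assms]
  by (cases "col 1"; cases "col (2 * n)") auto

lemma phi_black_couple:
  assumes "x \<in> black_couples col n"
  shows "phi col n x = (if col 1 then 2 * rank (black_couples col n) x + 2 else 2 * rank (black_couples col n) x + 1)"
proof -
  have "{y \<in> couples col n. col y = col x \<and> y < x} = {z \<in> black_couples col n. z < x}"
    using assms by (auto simp: black_couples_def)
  then show ?thesis using assms unfolding phi_def rank_def by (auto simp: black_couples_def Let_def)
qed

lemma phi_white_couple:
  assumes "x \<in> white_couples col n"
  shows "phi col n x = (if col 1 then 2 * rank (white_couples col n) x + 1 else 2 * rank (white_couples col n) x + 2)"
proof -
  have "{y \<in> couples col n. col y = col x \<and> y < x} = {z \<in> white_couples col n. z < x}"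
    using assms by (auto simp: white_couples_def)
  then show ?thesis using assms unfolding phi_def rank_def by (auto simp: white_couples_def Let_def)
qed

lemma odd_phi_couple:
  "x \<in> black_couples col n \<Longrightarrow> odd (phi col n x) \<longleftrightarrow> \<not> col 1"
  "x \<in> white_couples col n \<Longrightarrow> odd (phi col n x) \<longleftrightarrow> col 1"
  by (simp_all add: phi_black_couple phi_white_couple)

lemma inj_on_phi: "inj_on (phi col n) (couples col n)"
proof (rule inj_onI)
  let ?B = "black_couples col n" and ?W = "white_couples col n"
  fix x y assume "x \<in> couples col n" "y \<in> couples col n" and eq: "phi col n x = phi col n y"
  then consider "x \<in> ?B" "y \<in> ?B" | "x \<in> ?W" "y \<in> ?W" | "x \<in> ?B" "y \<in> ?W" | "x \<in> ?W" "y \<in> ?B"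
    using couples_eq_black_couples_Un by blast
  then show "x = y"
  proof cases
    case 1
    then have "rank ?B x = rank ?B y" using eq phi_black_couple[of _ col n] by (auto split: if_splits)
    then show ?thesis using 1 bij_betw_imp_inj_on[OF rank_bij[OF finite_black_couples]] by (meson inj_onD)
  next
    case 2
    then have "rank ?W x = rank ?W y" using eq phi_white_couple[of _ col n] by (auto split: if_splits)
    then show ?thesis using 2 bij_betw_imp_inj_on[OF rank_bij[OF finite_white_couples]] by (meson inj_onD)
  next
    case 3
    then show ?thesis using eq odd_phi_couple(1)[OF 3(1)] odd_phi_couple(2)[OF 3(2)] by simp
  next
    case 4
    then show ?thesis using eq odd_phi_couple(2)[OF 4(1)] odd_phi_couple(1)[OF 4(2)] by simp
  qed
qed

lemma phi_bij:
  assumes n: "0 < n" "card (blacks col n) = n"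
  shows "bij_betw (phi col n) (couples col n) {1..card (couples col n)}"
proof -
  let ?B = "black_couples col n" and ?W = "white_couples col n"
  define k where "k = card ?B"
  have card: "card ?W = k" "card (couples col n) = 2 * k"
    using card_white_couples_eq_black[OF n] unfolding k_def couples_eq_black_couples_Un[of col n]
    by (simp_all add: card_Un_disjoint[OF finite_black_couples finite_white_couples black_couples_Int_white_couples])
  have "phi col n x \<in> {1..2 * k}" if "x \<in> couples col n" for x
  proof (cases "x \<in> ?B")
    case True
    have "rank ?B x < k" using bij_betwE[OF rank_bij[OF finite_black_couples[of col n]]] True k_def by auto
    then show ?thesis using phi_black_couple[OF True] by auto
  next
    case False
    then have W: "x \<in> ?W" using that couples_eq_black_couples_Un by blast
    have "rank ?W x < k" using bij_betwE[OF rank_bij[OF finite_white_couples[of col n]]] W card by auto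
    then show ?thesis using phi_white_couple[OF W] by auto
  qed
  then have "phi col n ` couples col n = {1..2 * k}"
    by (intro card_subset_eq) (auto simp: card_image[OF inj_on_phi] card)
  then show ?thesis using inj_on_phi card by (simp add: bij_betw_def)
qed

lemma cperm_permutes:
  assumes "0 < n" "card (blacks col n) = n"
  shows "cperm col n permutes {1..card (couples col n)}"
proof (rule bij_imp_permutes)
  have "bij_betw (phi col n \<circ> (\<lambda>i. sorted_list_of_set (couples col n) ! (i - 1)))
      {1..card (couples col n)} {1..card (couples col n)}"
    by (rule bij_betw_trans[OF sorted_list_of_set_nth_bij[OF finite_couples] phi_bij[OF assms]])
  then show "bij_betw (cperm col n) {1..card (couples col n)} {1..card (couples col n)}"
    by (rule bij_betw_cong[THEN iffD1, rotated]) (simp add: cperm_def)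
qed (auto simp: cperm_def)

lemma signc_eq_sign: "signc col n = sign (cperm col n)"
proof -
  have "couples col n = {} \<Longrightarrow> cperm col n = id" by (auto simp: cperm_def)
  then show ?thesis by (simp add: signc_def)
qed

definition couple_inversions :: "(nat \<Rightarrow> bool) \<Rightarrow> nat \<Rightarrow> (nat \<times> nat) set" where
  "couple_inversions col n = {(x, y) \<in> couples col n \<times> couples col n. x < y \<and> phi col n y < phi col n x}"

lemma signc_eq_couple_inversions:
  assumes "0 < n" "card (blacks col n) = n"
  shows "signc col n = (-1) ^ card (couple_inversions col n)"
  unfolding signc_eq_sign sign_eq_inversions[OF cperm_permutes[OF assms]] couple_inversions_def
  by (subst card_inversions_sorted[OF finite_couples]) (auto simp: cperm_def)

lemma phi_mono_black_couples:
  "x \<in> black_couples col n \<Longrightarrow> y \<in> black_couples col n \<Longrightarrow> x < y \<Longrightarrow> phi col n x < phi col n y"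
  using rank_less[OF finite_black_couples, of x col n y] by (simp add: phi_black_couple)

lemma phi_mono_white_couples:
  "x \<in> white_couples col n \<Longrightarrow> y \<in> white_couples col n \<Longrightarrow> x < y \<Longrightarrow> phi col n x < phi col n y"
  using rank_less[OF finite_white_couples, of x col n y] by (simp add: phi_white_couple)

text \<open>\<open>phi\<close> is increasing on couples of one colour, so every inversion pairs a black couple with
  a white one; a black--white pair is an inversion iff exactly one of the two orders is reversed.\<close>
lemma card_couple_inversions:
  "card (couple_inversions col n) = card {(b, w) \<in> black_couples col n \<times> white_couples col n.
      (w < b) \<noteq> (phi col n w < phi col n b)}"
proof -
  let ?B = "black_couples col n" and ?W = "white_couples col n"
  define I1 where "I1 = {(b, w) \<in> ?B \<times> ?W. b < w \<and> phi col n w < phi col n b}"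
  define I2 where "I2 = {(b, w) \<in> ?B \<times> ?W. w < b \<and> phi col n b < phi col n w}"
  have fin: "finite I1" "finite I2"
    unfolding I1_def I2_def by (auto intro: finite_subset[of _ "?B \<times> ?W"] simp: finite_black_couples finite_white_couples)
  have "couple_inversions col n = I1 \<union> prod.swap ` I2"
  proof (intro equalityI subsetI)
    fix z assume "z \<in> couple_inversions col n"
    then obtain x y where z: "z = (x, y)" "x \<in> ?B \<union> ?W" "y \<in> ?B \<union> ?W" "x < y" "phi col n y < phi col n x"
      unfolding couple_inversions_def couples_eq_black_couples_Un by auto
    then consider "x \<in> ?B" "y \<in> ?W" | "x \<in> ?W" "y \<in> ?B"
      using phi_mono_black_couples[of x col n y] phi_mono_white_couples[of x col n y] by fastforce
    then show "z \<in> I1 \<union> prod.swap ` I2"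
    proof cases
      case 2
      then have "(y, x) \<in> I2" using z unfolding I2_def by auto
      then show ?thesis using z by (auto intro: rev_image_eqI)
    qed (use z I1_def in auto)
  qed (auto simp: I1_def I2_def couple_inversions_def black_couples_def white_couples_def)
  moreover have "I1 \<inter> prod.swap ` I2 = {}"
    by (auto simp: I1_def I2_def black_couples_def white_couples_def)
  ultimately have "card (couple_inversions col n) = card I1 + card I2"
    using fin by (simp add: card_Un_disjoint card_image)
  also have "\<dots> = card (I1 \<union> I2)"
    using fin by (intro card_Un_disjoint[symmetric]) (auto simp: I1_def I2_def)
  also have "I1 \<union> I2 = {(b, w) \<in> ?B \<times> ?W. (w < b) \<noteq> (phi col n w < phi col n b)}"
  proof -
    have "b \<noteq> w" "phi col n b \<noteq> phi col n w" if "b \<in> ?B" "w \<in> ?W" for b w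
      using that odd_phi_couple[of b col n] odd_phi_couple[of w col n] black_couples_Int_white_couples by auto
    then show ?thesis unfolding I1_def I2_def by (auto simp: linorder_neq_iff)
  qed
  finally show ?thesis .
qed

lemma card_phi_reversed:
  assumes "0 < n" "card (blacks col n) = n"
  shows "card {(b, w) \<in> black_couples col n \<times> white_couples col n. phi col n w < phi col n b}
      = card (black_couples col n) * (card (black_couples col n) - 1) div 2 + of_bool (col 1) * card (black_couples col n)"
proof -
  let ?B = "black_couples col n" and ?W = "white_couples col n"
  define k where "k = card ?B"
  have "bij_betw (map_prod (rank ?B) (rank ?W)) (?B \<times> ?W) ({0..<k} \<times> {0..<k})"
    using bij_betw_map_prod[OF rank_bij[OF finite_black_couples[of col n]] rank_bij[OF finite_white_couples[of col n]]]
    unfolding k_def card_white_couples_eq_black[OF assms] .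
  then have "card {z \<in> ?B \<times> ?W. phi col n (snd z) < phi col n (fst z)}
      = card {z \<in> {0..<k} \<times> {0..<k}. snd z < fst z \<or> col 1 \<and> snd z = fst z}"
    by (rule card_filter_bij_betw) (auto simp: phi_black_couple phi_white_couple split: if_splits)
  moreover have "{z \<in> ?B \<times> ?W. phi col n (snd z) < phi col n (fst z)}
      = {(b, w) \<in> ?B \<times> ?W. phi col n w < phi col n b}" by auto
  moreover have "{z \<in> {0..<k} \<times> {0..<k}. snd z < fst z \<or> col 1 \<and> snd z = fst z}
      = {(a, c) \<in> {0..<k} \<times> {0..<k}. c < a \<or> col 1 \<and> c = a}" by auto
  ultimately show ?thesis using card_lower_triangle k_def by simp
qed

lemma card_white_before_black_couples:
  assumes n: "0 < n"
  shows "int (card {(b, w) \<in> black_couples col n \<times> white_couples col n. w < b})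
      = white_black_pairs col (2 * n) + of_bool (col (2 * n) \<and> col 1) * white_pairs col (2 * n)"
proof -
  let ?B = "black_couples col n" and ?W = "white_couples col n"
  have "{(b, w) \<in> ?B \<times> ?W. w < b} = Sigma ?B (\<lambda>b. {w \<in> ?W. w < b})" by auto
  then have "int (card {(b, w) \<in> ?B \<times> ?W. w < b}) = (\<Sum>b\<in>?B. int (card {w \<in> ?W. w < b}))"
    by (simp add: card_SigmaI finite_black_couples finite_white_couples)
  also have "\<dots> = (\<Sum>b\<in>?B. white_pairs col b)"
  proof (rule sum.cong)
    fix b assume "b \<in> ?B"
    then have "{w \<in> ?W. w < b} = {1..<b} \<inter> {m. \<not> col m \<and> \<not> col (Suc m)}"
      using n by (auto simp: white_couples_eq black_couples_def couples_def)
    then show "int (card {w \<in> ?W. w < b}) = white_pairs col b"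
      by (simp add: white_pairs_def sum_of_bool_eq)
  qed simp
  also have "\<dots> = (\<Sum>b\<in>{m \<in> {1..<2 * n}. col m \<and> col (Suc m)}. white_pairs col b)
      + of_bool (col (2 * n) \<and> col 1) * white_pairs col (2 * n)"
    unfolding black_couples_eq[OF n] by (subst sum.union_disjoint) auto
  also have "(\<Sum>b\<in>{m \<in> {1..<2 * n}. col m \<and> col (Suc m)}. white_pairs col b)
      = (\<Sum>m\<in>{1..<2 * n}. if col m \<and> col (Suc m) then white_pairs col m else 0)"
    by (rule sum.inter_filter) simp
  also have "\<dots> = white_black_pairs col (2 * n)"
    unfolding white_black_pairs_def by (rule sum.cong) auto
  finally show ?thesis .
qed

lemma sum_couples_div_2:
  assumes n: "0 < n"
  shows "(\<Sum>m\<in>couples col n. int (m div 2)) = couple_halves col (2 * n) + of_bool (col (2 * n) = col 1) * int n"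
proof -
  have "couples col n = {m \<in> {1..<2 * n}. col m = col (Suc m)} \<union> (if col (2 * n) = col 1 then {2 * n} else {})"
    using n by (auto simp: couples_def nxt_def)
  then have "(\<Sum>m\<in>couples col n. int (m div 2))
      = (\<Sum>m\<in>{m \<in> {1..<2 * n}. col m = col (Suc m)}. int (m div 2)) + of_bool (col (2 * n) = col 1) * int n"
    by (simp add: sum.union_disjoint)
  also have "(\<Sum>m\<in>{m \<in> {1..<2 * n}. col m = col (Suc m)}. int (m div 2))
      = (\<Sum>m\<in>{1..<2 * n}. if col m = col (Suc m) then int (m div 2) else 0)"
    by (rule sum.inter_filter) simp
  also have "\<dots> = couple_halves col (2 * n)"
    unfolding couple_halves_def by (rule sum.cong) auto
  finally show ?thesis .
qed

lemma circle_parity_arith: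
  fixes Z P S kb t n :: int and f e :: bool
  assumes "even (Z + P + S + prefix_parity_term n False n kb t f e)"
  shows "even ((P + of_bool (e \<and> f) * (kb + of_bool f + of_bool e - 1))
    + (t + of_bool (e \<and> f) * kb + of_bool f * (kb + of_bool (e \<and> f))) + (S + of_bool (e = f) * n) + Z)"
  using assms unfolding prefix_parity_term_def
  by (cases e; cases f) (simp_all add: algebra_simps, argo+)

lemma couple_pair_counts_parity:
  assumes n: "0 < n" "card (blacks col n) = n"
  shows "even (int (card {(b, w) \<in> black_couples col n \<times> white_couples col n. w < b})
    + int (card {(b, w) \<in> black_couples col n \<times> white_couples col n. phi col n w < phi col n b})
    + (couple_halves col (2 * n) + of_bool (col (2 * n) = col 1) * int n) + change_halves col (2 * n))"
proof -
  let ?B = "black_couples col n" and ?W = "white_couples col n"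
  define kb where "kb = black_pairs col (2 * n)"
  define k where "k = card ?B"
  define f e where "f = col 1" and "e = col (2 * n)"
  have "int (card {(b, w) \<in> ?B \<times> ?W. w < b})
      = white_black_pairs col (2 * n) + of_bool (e \<and> f) * (kb + of_bool f + of_bool e - 1)"
    using card_white_before_black_couples[OF n(1)] white_pairs_circle[OF n] unfolding kb_def e_def f_def
    by simp
  moreover have "int (card {(b, w) \<in> ?B \<times> ?W. phi col n w < phi col n b})
      = kb * (kb - 1) div 2 + of_bool (e \<and> f) * kb + of_bool f * (kb + of_bool (e \<and> f))"
  proof -
    have k: "int k = kb + of_bool (e \<and> f)" using card_black_couples[OF n(1)] unfolding k_def kb_def e_def f_def
      by simp
    have "int (k * (k - 1) div 2) = int k * (int k - 1) div 2" by (cases k) (simp_all add: zdiv_int algebra_simps)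
    also have "\<dots> = kb * (kb - 1) div 2 + of_bool (e \<and> f) * kb" using k triangle_Suc[of kb] by auto
    finally show ?thesis using card_phi_reversed[OF n] k unfolding k_def f_def by simp
  qed
  moreover have "even (change_halves col (2 * n) + white_black_pairs col (2 * n) + couple_halves col (2 * n)
      + prefix_parity_term (int n) False (int n) kb (kb * (kb - 1) div 2) f e)"
  proof -
    have "blacks_upto col (2 * n) = int n"
      using n unfolding blacks_upto_def blacks_def by (simp add: sum_of_bool_eq Int_def conj_commute)
    then show ?thesis using prefix_parity[of "2 * n" col] n(1) unfolding kb_def f_def e_def by simp
  qed
  ultimately show ?thesis unfolding e_def f_def by (simp only: circle_parity_arith)
qed

lemma signc_times_couple_sign:
  assumes n: "0 < n" "card (blacks col n) = n"
  shows "signc col n * (-1) ^ (\<Sum>m\<in>couples col n. m div 2) = parity_sign (change_halves col (2 * n))"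
proof -
  let ?B = "black_couples col n" and ?W = "white_couples col n"
  define S where "S = couple_halves col (2 * n) + of_bool (col (2 * n) = col 1) * int n"
  define X where "X = card (couple_inversions col n)"
  define P where "P = card {(b, w) \<in> ?B \<times> ?W. w < b}"
  define Q where "Q = card {(b, w) \<in> ?B \<times> ?W. phi col n w < phi col n b}"
  define T where "T = card {(b, w) \<in> ?B \<times> ?W. w < b \<and> phi col n w < phi col n b}"
  have "X + 2 * T = P + Q"
    using card_filter_xor[of "?B \<times> ?W" "\<lambda>b w. w < b" "\<lambda>b w. phi col n w < phi col n b"]
    unfolding X_def P_def Q_def T_def card_couple_inversions
    by (simp add: finite_black_couples finite_white_couples)
  moreover have "even (int P + int Q + S + change_halves col (2 * n))"
    using couple_pair_counts_parity[OF n] unfolding P_def Q_def S_def .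
  ultimately have "parity_sign (int X + S) = parity_sign (change_halves col (2 * n))"
    by (intro parity_sign_cong) presburger
  moreover have "(-1::int) ^ (\<Sum>m\<in>couples col n. m div 2) = parity_sign S"
    using sum_couples_div_2[OF n(1), of col] unfolding minus_one_power_eq_parity_sign S_def
    by (simp add: of_nat_sum eq_commute)
  ultimately show ?thesis
    unfolding signc_eq_couple_inversions[OF n] minus_one_power_eq_parity_sign X_def
    by (simp add: parity_sign_add)
qed

theorem mainTheorem15:
  fixes col :: "nat \<Rightarrow> bool" and n :: nat
  assumes "0 < n" and "card (blacks col n) = n"
  shows
   "(\<forall>a\<in>{1..<n}. (\<not> (\<exists>m. bnode col n a < m \<and> m + 1 < bnode col n (a + 1) \<and> \<not> col m \<and> \<not> col (m + 1)))
        \<longrightarrow> (\<forall>w\<in>whites col n. eps col (bnode col n (a + 1)) w = - eps col (bnode col n a) w))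
  \<and> (\<forall>c\<in>{1..<n}. (\<not> (\<exists>m. wnode col n c < m \<and> m + 1 < wnode col n (c + 1) \<and> col m \<and> col (m + 1)))
        \<longrightarrow> (\<forall>b\<in>blacks col n. eps col b (wnode col n (c + 1)) = - eps col b (wnode col n c)))
  \<and> (\<exists>r c :: nat \<Rightarrow> int. (\<forall>a\<in>{1..n}. r a \<in> {1, -1}) \<and> (\<forall>d\<in>{1..n}. c d \<in> {1, -1}) \<and>
        (\<forall>a\<in>{1..n}. \<forall>d\<in>{1..n}. r a * c d * eps col (bnode col n a) (wnode col n d) = (-1) ^ (a + d)))
  \<and> (\<forall>r c :: nat \<Rightarrow> int. (\<forall>a\<in>{1..n}. r a \<in> {1, -1}) \<and> (\<forall>d\<in>{1..n}. c d \<in> {1, -1}) \<and>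
        (\<forall>a\<in>{1..n}. \<forall>d\<in>{1..n}. r a * c d * eps col (bnode col n a) (wnode col n d) = (-1) ^ (a + d))
      \<longrightarrow> (-1::int) ^ (card {a\<in>{1..n}. r a = -1} + card {d\<in>{1..n}. c d = -1})
          = (if col 1 then 1 else (-1) ^ n) * signc col n * (-1) ^ (\<Sum>m\<in>couples col n. m div 2))"
proof (intro conjI allI impI ballI)
  fix r c :: "nat \<Rightarrow> int"
  assume "(\<forall>a\<in>{1..n}. r a \<in> {1, -1}) \<and> (\<forall>d\<in>{1..n}. c d \<in> {1, -1}) \<and>
    (\<forall>a\<in>{1..n}. \<forall>d\<in>{1..n}. r a * c d * eps col (bnode col n a) (wnode col n d) = (-1) ^ (a + d))"
  then have "(-1::int) ^ (card {a\<in>{1..n}. r a = -1} + card {d\<in>{1..n}. c d = -1})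
      = (if col 1 then (-1) ^ n else 1) * (-1) ^ n * parity_sign (change_halves col (2 * n))"
    using row_column_signs_parity[OF assms(2)] parity_sign_node_sum by (simp add: mult.assoc)
  also have "\<dots> = (if col 1 then 1 else (-1) ^ n) * parity_sign (change_halves col (2 * n))"
    by (simp flip: power_add mult_2)
  finally show "(-1::int) ^ (card {a\<in>{1..n}. r a = -1} + card {d\<in>{1..n}. c d = -1})
      = (if col 1 then 1 else (-1) ^ n) * signc col n * (-1) ^ (\<Sum>m\<in>couples col n. m div 2)"
    using signc_times_couple_sign[OF assms] by (simp add: mult.assoc)
qed (use eps_row_flip[OF assms(2)] eps_column_flip[OF assms(2)] exists_row_column_signs[OF assms(2)] in blast)+

end
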